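(* For every integer $n\geq 1$, the map $\Phi$ restricts to a bijection from $\mathcal{M}^\star_n$ onto $\mathcal{GD}^\star_n$, and to a bijection from $\mathcal{M}^{s,\star}_n$ onto $\mathcal{D}^\star_n$.
   Context: For $n\geq 1$, $\mathcal{M}_n$ is the set of $n$-multisets of $[n]=\{1,\dots,n\}$, each identified with the non-decreasing sequence $\pi=\pi_1\cdots\pi_n$ of its elements. $\pi$ is superdiagonal if $i\leq\pi_i$ for all $i$. $\mathcal{M}^\star_n$ is the set of $\pi\in\mathcal{M}_n$ with no consecutive integers, i.e. $\pi_{i+1}\neq\pi_i+1$ for all $i\in[n-1]$, and $\mathcal{M}^{s,\star}_n$ is the set of superdiagonal elements of $\mathcal{M}^\star_n$. Paths are words in $U$ (up step) and $D$ (down step); $\mathcal{GD}_n$ is the set of words with $n$ letters $U$ and $n$ letters $D$ starting with $U$, and $\mathcal{D}_n\subseteq\mathcal{GD}_n$ those in which every prefix has at least as many $U$'s as $D$'s (Dyck paths). For a set $\mathcal{P}$ of paths, $\mathcal{P}^\star$ is the subset of paths not containing $DUD$ as a factor (three consecutive letters). The map $\Phi:\mathcal{M}_n\to\mathcal{GD}_n$ is $\Phi(\pi)=U^{\pi_1}DU^{\pi_2-\pi_1}D\cdots U^{\pi_n-\pi_{n-1}}DU^{n-\pi_n}$. *)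

theory Defs
  imports Main
begin

text \<open>An n-multiset of [n] is identified with its non-decreasing sequence of elements,
  represented as a list of length n with entries in {1..n}.\<close>

definition Mset :: "nat \<Rightarrow> nat list set" where
  "Mset n = {pi. length pi = n \<and> sorted pi \<and> (\<forall>x\<in>set pi. 1 \<le> x \<and> x \<le> n)}"

definition superdiagonal :: "nat list \<Rightarrow> bool" where
  "superdiagonal pi \<longleftrightarrow> (\<forall>i<length pi. i + 1 \<le> pi ! i)"

definition no_consec :: "nat list \<Rightarrow> bool" where
  "no_consec pi \<longleftrightarrow> (\<forall>i. i + 1 < length pi \<longrightarrow> pi ! (i + 1) \<noteq> pi ! i + 1)"

definition Mset_star :: "nat \<Rightarrow> nat list set" where
  "Mset_star n = {pi \<in> Mset n. no_consec pi}"

definition Mset_s_star :: "nat \<Rightarrow> nat list set" where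
  "Mset_s_star n = {pi \<in> Mset_star n. superdiagonal pi}"

datatype step = U | D

definition GD :: "nat \<Rightarrow> step list set" where
  "GD n = {w. count_list w U = n \<and> count_list w D = n \<and> w \<noteq> [] \<and> hd w = U}"

definition Dyck :: "nat \<Rightarrow> step list set" where
  "Dyck n = {w \<in> GD n. \<forall>k \<le> length w.
      count_list (take k w) D \<le> count_list (take k w) U}"

definition no_DUD :: "step list \<Rightarrow> bool" where
  "no_DUD w \<longleftrightarrow> (\<nexists>xs ys. w = xs @ [D, U, D] @ ys)"

definition GD_star :: "nat \<Rightarrow> step list set" where
  "GD_star n = {w \<in> GD n. no_DUD w}"

definition Dyck_star :: "nat \<Rightarrow> step list set" where
  "Dyck_star n = {w \<in> Dyck n. no_DUD w}"

fun phi_aux :: "nat \<Rightarrow> nat \<Rightarrow> nat list \<Rightarrow> step list" where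
  "phi_aux n prev [] = replicate (n - prev) U"
| "phi_aux n prev (x # xs) = replicate (x - prev) U @ [D] @ phi_aux n x xs"

definition Phi :: "nat \<Rightarrow> nat list \<Rightarrow> step list" where
  "Phi n pi = phi_aux n 0 pi"

end

theory Submission
  imports Defs "HOL-Library.Sublist"
begin

text \<open>The path Phi n pi has exactly pi_i up steps before its i-th down step, so reading off, for
  each D, the number of U's seen so far inverts Phi and makes it a bijection from n-multisets
  of [n] onto GD_n (a multiset of positive entries yields a path starting with U). A factor DUD
  is a D followed by a single U and then a D, i.e. two consecutive entries pi_(i+1) = pi_i + 1.
  The height of the path right after its i-th D is pi_i - i, and these are its local minima,
  so the path stays weakly above the axis exactly when pi is superdiagonal. Both bijections
  of the theorem are therefore restrictions of the first one.\<close>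

fun phi_aux_inv :: "nat \<Rightarrow> step list \<Rightarrow> nat list" where
  "phi_aux_inv c [] = []"
| "phi_aux_inv c (U # w) = phi_aux_inv (Suc c) w"
| "phi_aux_inv c (D # w) = c # phi_aux_inv c w"

lemma phi_aux_inv_replicate_U_append:
  "phi_aux_inv c (replicate k U @ w) = phi_aux_inv (c + k) w"
  by (induction k arbitrary: c) auto

lemma phi_aux_inv_phi_aux:
  "sorted xs \<Longrightarrow> \<forall>y\<in>set xs. c \<le> y \<Longrightarrow> phi_aux_inv c (phi_aux n c xs) = xs"
  using phi_aux_inv_replicate_U_append[where w = "[]"]
  by (induction xs arbitrary: c) (simp_all add: phi_aux_inv_replicate_U_append)

lemma length_phi_aux_inv: "length (phi_aux_inv c w) = count_list w D"
  by (induction c w rule: phi_aux_inv.induct) auto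

lemma set_phi_aux_inv: "y \<in> set (phi_aux_inv c w) \<Longrightarrow> c \<le> y \<and> y \<le> c + count_list w U"
  by (induction c w rule: phi_aux_inv.induct) fastforce+

lemma sorted_phi_aux_inv: "sorted (phi_aux_inv c w)"
  by (induction c w rule: phi_aux_inv.induct) (auto dest: set_phi_aux_inv)

lemma replicate_diff_Suc: "c < m \<Longrightarrow> replicate (m - c) a = a # replicate (m - Suc c) a"
  by (metis Suc_diff_Suc replicate_Suc)

lemma phi_aux_Cons_U:
  assumes "c < n" "\<forall>y\<in>set ys. c < y"
  shows "phi_aux n c ys = U # phi_aux n (Suc c) ys"
  using assms by (cases ys) (simp_all add: replicate_diff_Suc)

lemma phi_aux_phi_aux_inv: "phi_aux (c + count_list w U) c (phi_aux_inv c w) = w"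
proof (induction c w rule: phi_aux_inv.induct)
  case (2 c w)
  have "\<forall>y\<in>set (phi_aux_inv (Suc c) w). c < y"
    using set_phi_aux_inv by fastforce
  then show ?case
    using 2 phi_aux_Cons_U[of c "Suc c + count_list w U"] by simp
qed simp_all

lemma count_list_replicate: "count_list (replicate k a) b = (if a = b then k else 0)"
  by (induction k) auto

lemma count_list_phi_aux:
  assumes "sorted xs" "c \<le> n" "\<forall>y\<in>set xs. c \<le> y \<and> y \<le> n"
  shows "count_list (phi_aux n c xs) U = n - c" "count_list (phi_aux n c xs) D = length xs"
  using assms by (induction xs arbitrary: c) (auto simp: count_list_replicate)

lemma Phi_in_GD:
  assumes "pi \<in> Mset n" "1 \<le> n"
  shows "Phi n pi \<in> GD n"
proof -
  have pi: "sorted pi" "length pi = n" "\<forall>y\<in>set pi. 1 \<le> y \<and> y \<le> n"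
    using assms(1) by (auto simp: Mset_def)
  then obtain x xs where "pi = x # xs" "1 \<le> x"
    using assms(2) by (cases pi) auto
  then have "hd (Phi n pi) = U"
    by (cases x) (auto simp: Phi_def)
  moreover have "Phi n pi \<noteq> []"
    using \<open>pi = x # xs\<close> by (simp add: Phi_def)
  ultimately show ?thesis
    using count_list_phi_aux[of pi 0 n] pi by (simp add: GD_def Phi_def)
qed

lemma phi_aux_inv_in_Mset:
  assumes "w \<in> GD n"
  shows "phi_aux_inv 0 w \<in> Mset n"
proof -
  obtain w' where "w = U # w'"
    using assms by (cases w) (auto simp: GD_def)
  then show ?thesis
    using assms length_phi_aux_inv[of 0 w] set_phi_aux_inv[of _ 1 w'] sorted_phi_aux_inv[of 0 w]
    by (auto simp: Mset_def GD_def)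
qed

lemma bij_betw_Phi_Mset_GD:
  assumes "1 \<le> n"
  shows "bij_betw (Phi n) (Mset n) (GD n)"
proof (rule bij_betw_byWitness[where f' = "phi_aux_inv 0"])
  show "\<forall>pi\<in>Mset n. phi_aux_inv 0 (Phi n pi) = pi"
    by (auto simp: Mset_def Phi_def intro: phi_aux_inv_phi_aux)
  show "\<forall>w\<in>GD n. Phi n (phi_aux_inv 0 w) = w"
    using phi_aux_phi_aux_inv[of 0] by (auto simp: GD_def Phi_def)
  show "Phi n ` Mset n \<subseteq> GD n"
    using Phi_in_GD assms by blast
  show "phi_aux_inv 0 ` GD n \<subseteq> Mset n"
    using phi_aux_inv_in_Mset by blast
qed

lemma no_DUD_iff_not_sublist: "no_DUD w \<longleftrightarrow> \<not> sublist [D, U, D] w"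
  by (auto simp: no_DUD_def sublist_def)

lemma no_DUD_Cons: "no_DUD (a # w) \<longleftrightarrow> \<not> (a = D \<and> prefix [U, D] w) \<and> no_DUD w"
  by (auto simp: no_DUD_iff_not_sublist sublist_Cons_right)

lemma no_DUD_replicate_U_append: "no_DUD (replicate k U @ w) \<longleftrightarrow> no_DUD w"
  by (induction k) (simp_all add: no_DUD_Cons)

lemma prefix_UD_replicate_U_append:
  "prefix [U, D] (replicate k U @ w) \<longleftrightarrow> k = 0 \<and> prefix [U, D] w \<or> k = 1 \<and> prefix [D] w"
  by (cases k; cases "k - 1") auto

lemma prefix_UD_phi_aux: "prefix [U, D] (phi_aux n c xs) \<longleftrightarrow> xs \<noteq> [] \<and> hd xs = c + 1"
  using prefix_UD_replicate_U_append[where w = "[]"]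
  by (cases xs) (auto simp: prefix_UD_replicate_U_append)

lemma no_consec_iff_successively: "no_consec xs \<longleftrightarrow> successively (\<lambda>x y. y \<noteq> x + 1) xs"
  by (simp add: no_consec_def successively_conv_nth)

lemma no_DUD_phi_aux: "no_DUD (phi_aux n c xs) \<longleftrightarrow> no_consec xs"
proof (induction xs arbitrary: c)
  case Nil
  then show ?case
    using no_DUD_replicate_U_append[where w = "[]"] by (simp add: no_DUD_def no_consec_def)
next
  case (Cons x xs)
  then show ?case
    by (auto simp: no_DUD_replicate_U_append no_DUD_Cons prefix_UD_phi_aux
        no_consec_iff_successively successively_Cons)
qed

definition above_axis_from :: "nat \<Rightarrow> step list \<Rightarrow> bool" where
  "above_axis_from h w \<longleftrightarrow>
    (\<forall>k \<le> length w. count_list (take k w) D \<le> count_list (take k w) U + h)"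

lemma above_axis_from_Nil: "above_axis_from h []"
  by (simp add: above_axis_from_def)

lemma above_axis_from_Cons:
  "above_axis_from h (a # w) \<longleftrightarrow>
    (\<forall>k \<le> length w. count_list (a # take k w) D \<le> count_list (a # take k w) U + h)"
  unfolding above_axis_from_def le_simps(2)[symmetric] by (simp add: All_less_Suc2)

lemma above_axis_from_U: "above_axis_from h (U # w) \<longleftrightarrow> above_axis_from (Suc h) w"
  unfolding above_axis_from_Cons by (simp add: above_axis_from_def)

lemma above_axis_from_D: "above_axis_from h (D # w) \<longleftrightarrow> 0 < h \<and> above_axis_from (h - 1) w"
  unfolding above_axis_from_Cons by (auto simp: above_axis_from_def)

lemma above_axis_from_replicate_U_append:
  "above_axis_from h (replicate k U @ w) \<longleftrightarrow> above_axis_from (h + k) w"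
  by (induction k arbitrary: h) (simp_all add: above_axis_from_U)

text \<open>After c up steps and i down steps the path is at height c - i.\<close>

lemma above_axis_from_phi_aux:
  assumes "sorted xs" "\<forall>y\<in>set xs. c \<le> y" "i \<le> c"
  shows "above_axis_from (c - i) (phi_aux n c xs) \<longleftrightarrow> (\<forall>j < length xs. i + j < xs ! j)"
  using assms
proof (induction xs arbitrary: c i)
  case Nil
  then show ?case
    using above_axis_from_replicate_U_append[where w = "[]"] by (simp add: above_axis_from_Nil)
next
  case (Cons x xs)
  then have "above_axis_from (c - i) (phi_aux n c (x # xs)) \<longleftrightarrow>
      i < x \<and> above_axis_from (x - Suc i) (phi_aux n x xs)"
    by (auto simp: above_axis_from_replicate_U_append above_axis_from_D)
  also have "\<dots> \<longleftrightarrow> i < x \<and> (\<forall>j < length xs. Suc i + j < xs ! j)"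
    using Cons by auto
  also have "\<dots> \<longleftrightarrow> (\<forall>j < length (x # xs). i + j < (x # xs) ! j)"
    by (simp add: All_less_Suc2)
  finally show ?case .
qed

lemma Phi_in_Dyck_iff_superdiagonal:
  assumes "pi \<in> Mset n" "1 \<le> n"
  shows "Phi n pi \<in> Dyck n \<longleftrightarrow> superdiagonal pi"
  using assms above_axis_from_phi_aux[of pi 0 0 n] Phi_in_GD
  by (auto simp: Dyck_def Mset_def Phi_def superdiagonal_def above_axis_from_def Suc_le_eq)

lemma bij_betw_restrict_Collect:
  assumes "bij_betw f A B" "\<And>a. a \<in> A \<Longrightarrow> P a \<longleftrightarrow> Q (f a)"
  shows "bij_betw f {a \<in> A. P a} {b \<in> B. Q b}"
proof (rule bij_betw_subset[OF assms(1)])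
  show "f ` {a \<in> A. P a} = {b \<in> B. Q b}"
    using assms bij_betw_imp_surj_on[OF assms(1)] by auto
qed auto

theorem theorem2:
  fixes n :: nat
  assumes "n \<ge> 1"
  shows "bij_betw (Phi n) (Mset_star n) (GD_star n) \<and>
         bij_betw (Phi n) (Mset_s_star n) (Dyck_star n)"
proof
  have bij: "bij_betw (Phi n) (Mset n) (GD n)"
    using bij_betw_Phi_Mset_GD assms .
  have no_DUD_Phi: "no_DUD (Phi n pi) \<longleftrightarrow> no_consec pi" for pi
    by (simp add: Phi_def no_DUD_phi_aux)
  show "bij_betw (Phi n) (Mset_star n) (GD_star n)"
    unfolding Mset_star_def GD_star_def
    by (rule bij_betw_restrict_Collect[OF bij]) (simp add: no_DUD_Phi)
  have "Mset_s_star n = {pi \<in> Mset n. no_consec pi \<and> superdiagonal pi}"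
    by (auto simp: Mset_s_star_def Mset_star_def)
  moreover have "Dyck_star n = {w \<in> GD n. no_DUD w \<and> w \<in> Dyck n}"
    by (auto simp: Dyck_star_def Dyck_def)
  ultimately show "bij_betw (Phi n) (Mset_s_star n) (Dyck_star n)"
    using bij_betw_restrict_Collect[OF bij] Phi_in_Dyck_iff_superdiagonal assms
    by (simp add: no_DUD_Phi)
qed

end
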